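(* For $\tau > 0$ let $P_\tau$ denote the $\mathrm{L}^2(\mathbb{R})$-orthogonal projection onto the functions that are constant on each interval $]k\tau, (k+1)\tau[$, $k \in \mathbb{Z}$. There exists $C>0$ such that for all $\tau > 0$ and all $u \in \mathrm{H}^{1/2}(\mathbb{R})$, $P_\tau u \in \mathrm{H}^{1/2}_w(\mathbb{R})$ and $$\|P_\tau u\|_{\mathrm{L}^2} + |P_\tau u|_{\mathrm{H}^{1/2}_w} \leq C \left(\|u\|_{\mathrm{L}^2} + |u|_{\mathrm{H}^{1/2}}\right).$$
   Context: $\mathrm{H}^{1/2}(\mathbb{R})$ is the usual Sobolev space, with seminorm $|u|_{\mathrm{H}^{1/2}}$ (e.g. the Slobodetski seminorm $|u|_{\mathrm{H}^{s}}^2 = \iint_{\mathbb{R}^2} \frac{|u(x+y)-u(x)|^2}{|y|^{1+2s}}\,\mathrm{d}x\,\mathrm{d}y$ with $s=1/2$, or the equivalent Fourier seminorm $\int |\xi|\,|\mathcal{F}u(\xi)|^2\mathrm{d}\xi$). The space $\mathrm{H}^{1/2}_w(\mathbb{R})$ consists of $u \in \mathrm{L}^2(\mathbb{R})$ for which there is $C \geq 0$ with $\|u - \tau_y u\|_{\mathrm{L}^2} \leq C|y|^{1/2}$ for all $y \in \mathbb{R}$, where $\tau_y u = u(\cdot + y)$ denotes translation by $y$; the best such constant $C$ is denoted $|u|_{\mathrm{H}^{1/2}_w}$. *)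

theory Defs
  imports "HOL-Analysis.Analysis"
begin

definition L2_fun :: "(real \<Rightarrow> real) \<Rightarrow> bool" where
  "L2_fun u \<longleftrightarrow> u \<in> borel_measurable lborel \<and> integrable lborel (\<lambda>x. (u x)\<^sup>2)"

definition L2_norm :: "(real \<Rightarrow> real) \<Rightarrow> real" where
  "L2_norm u = sqrt (integral\<^sup>L lborel (\<lambda>x. (u x)\<^sup>2))"

text \<open>Slobodetski double integral for s = 1/2 (|y|^(1+2s) = y^2).\<close>
definition H12_energy :: "(real \<Rightarrow> real) \<Rightarrow> ennreal" where
  "H12_energy u = (\<integral>\<^sup>+ z. ennreal ((u (fst z + snd z) - u (fst z))\<^sup>2 / (snd z)\<^sup>2) \<partial>(lborel :: (real \<times> real) measure))"

definition H12 :: "(real \<Rightarrow> real) \<Rightarrow> bool" where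
  "H12 u \<longleftrightarrow> L2_fun u \<and> H12_energy u < \<infinity>"

definition H12_semi :: "(real \<Rightarrow> real) \<Rightarrow> real" where
  "H12_semi u = sqrt (enn2real (H12_energy u))"

definition transl :: "real \<Rightarrow> (real \<Rightarrow> real) \<Rightarrow> (real \<Rightarrow> real)" where
  "transl y u = (\<lambda>x. u (x + y))"

definition H12w_consts :: "(real \<Rightarrow> real) \<Rightarrow> real set" where
  "H12w_consts u = {C. C \<ge> 0 \<and> (\<forall>y. L2_norm (\<lambda>x. u x - transl y u x) \<le> C * sqrt \<bar>y\<bar>)}"

definition H12w :: "(real \<Rightarrow> real) \<Rightarrow> bool" where
  "H12w u \<longleftrightarrow> L2_fun u \<and> H12w_consts u \<noteq> {}"

definition H12w_semi :: "(real \<Rightarrow> real) \<Rightarrow> real" where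
  "H12w_semi u = Inf (H12w_consts u)"

text \<open>L2-orthogonal projection onto functions constant on each ]k tau,(k+1) tau[:
  the average of u over the cell containing x (the value on the null set of
  grid points is irrelevant).\<close>
definition P_proj :: "real \<Rightarrow> (real \<Rightarrow> real) \<Rightarrow> (real \<Rightarrow> real)" where
  "P_proj \<tau> u = (\<lambda>x. let k = real_of_int \<lfloor>x / \<tau>\<rfloor> in
      (1 / \<tau>) * (LBINT t=k * \<tau>..(k + 1) * \<tau>. u t))"

end

theory Submission
  imports Defs
begin

text \<open>Write \<open>E(u)\<close> for the Slobodetski energy and \<open>P u\<close> for the cell average. Since the
  points of a cell are less than \<open>\<tau>\<close> apart, \<open>\<parallel>P u - u\<parallel>\<^sup>2 \<le> \<tau> E(u)\<close>. Averaging the triangle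
  inequality through \<open>\<tau>\<^sub>z u\<close> over \<open>z\<close> between \<open>0\<close> and \<open>y\<close> gives
  \<open>\<parallel>\<tau>\<^sub>y u - u\<parallel>\<^sup>2 \<le> 4 \<bar>y\<bar> E(u)\<close>; for \<open>\<bar>y\<bar> > \<tau>\<close> the two bounds combine to
  \<open>\<parallel>\<tau>\<^sub>y P u - P u\<parallel>\<^sup>2 \<le> 18 \<bar>y\<bar> E(u)\<close>. For \<open>\<bar>y\<bar> \<le> \<tau>\<close>, \<open>P u (x + y) \<noteq> P u x\<close> only for \<open>x\<close>
  within \<open>\<bar>y\<bar>\<close> of a grid point, and there the difference of the two neighbouring averages
  is controlled by the energy density of \<open>u\<close> on the cell of \<open>x\<close>. Finally \<open>P\<close> is an
  \<open>L\<^sup>2\<close>-contraction.\<close>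

lemma nn_integral_lborel_shift:
  fixes f :: "real \<Rightarrow> ennreal"
  assumes [measurable]: "f \<in> borel_measurable borel"
  shows "(\<integral>\<^sup>+x. f (x + y) \<partial>lborel) = (\<integral>\<^sup>+x. f x \<partial>lborel)"
  using nn_integral_real_affine[OF assms, of 1 y] by (simp add: add.commute)

lemma nn_integral_lborel_reflect:
  fixes f :: "real \<Rightarrow> ennreal"
  assumes [measurable]: "f \<in> borel_measurable borel"
  shows "(\<integral>\<^sup>+x. f (y - x) \<partial>lborel) = (\<integral>\<^sup>+x. f x \<partial>lborel)"
  using nn_integral_real_affine[OF assms, of "-1" y] by simp

lemma square_le_difference_quotient:
  fixes v d T :: real
  assumes "\<bar>d\<bar> \<le> T" "d = 0 \<Longrightarrow> v = 0"
  shows "v\<^sup>2 \<le> T\<^sup>2 * (v\<^sup>2 / d\<^sup>2)"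
proof (cases "d = 0")
  case True
  then show ?thesis using assms by simp
next
  case False
  have "d\<^sup>2 \<le> T\<^sup>2" using assms(1) by (metis abs_ge_zero power2_abs power_mono)
  then have "v\<^sup>2 / d\<^sup>2 * d\<^sup>2 \<le> v\<^sup>2 / d\<^sup>2 * T\<^sup>2" by (intro mult_left_mono) auto
  then show ?thesis using False by (simp add: mult.commute)
qed

lemma square_add_le: "((p::real) + q)\<^sup>2 \<le> 2 * p\<^sup>2 + 2 * q\<^sup>2"
  using zero_le_power2[of "p - q"] by (simp add: power2_eq_square algebra_simps)

lemma ennreal_square_add3_le:
  "ennreal (((p::real) + q + r)\<^sup>2) \<le> 3 * (ennreal (p\<^sup>2) + ennreal (q\<^sup>2) + ennreal (r\<^sup>2))"
proof -
  have "0 \<le> (p - q)\<^sup>2 + (q - r)\<^sup>2 + (p - r)\<^sup>2" by simp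
  then have "ennreal ((p + q + r)\<^sup>2) \<le> ennreal (3 * (p\<^sup>2 + q\<^sup>2 + r\<^sup>2))"
    by (intro ennreal_leI) (simp add: power2_eq_square algebra_simps)
  also have "\<dots> = 3 * (ennreal (p\<^sup>2) + ennreal (q\<^sup>2) + ennreal (r\<^sup>2))"
    by (subst ennreal_mult) (auto simp: ennreal_plus)
  finally show ?thesis .
qed

lemma mean_square_le:
  fixes g :: "'a \<Rightarrow> real"
  assumes [measurable]: "A \<in> sets M" and mA: "emeasure M A = ennreal \<tau>" and "\<tau> > 0"
    and [measurable]: "g \<in> borel_measurable M"
    and int: "integrable M (\<lambda>s. indicator A s * g s)"
  shows "ennreal (((1/\<tau>) * integral\<^sup>L M (\<lambda>s. indicator A s * g s))\<^sup>2)
     \<le> ennreal (1/\<tau>) * (\<integral>\<^sup>+s. indicator A s * ennreal ((g s)\<^sup>2) \<partial>M)"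
proof (cases "(\<integral>\<^sup>+s. indicator A s * ennreal ((g s)\<^sup>2) \<partial>M) = \<infinity>")
  case True
  then show ?thesis using \<open>\<tau> > 0\<close> by (simp add: ennreal_mult_top)
next
  case False
  have nn_eq: "(\<integral>\<^sup>+s. indicator A s * ennreal ((g s)\<^sup>2) \<partial>M) = (\<integral>\<^sup>+s. ennreal (indicator A s * (g s)\<^sup>2) \<partial>M)"
    by (intro nn_integral_cong) (auto simp: indicator_def)
  have int2: "integrable M (\<lambda>s. indicator A s * (g s)\<^sup>2)"
    using False by (intro integrableI_nonneg) (auto simp: nn_eq[symmetric] top.not_eq_extremum)
  have int0: "integrable M (\<lambda>s. indicator A s :: real)"
    using mA by (simp add: integrable_indicator_iff)
  have "measure M A = \<tau>" using mA \<open>\<tau> > 0\<close> by (simp add: measure_def)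
  define I1 where "I1 = integral\<^sup>L M (\<lambda>s. indicator A s * g s)"
  define I2 where "I2 = integral\<^sup>L M (\<lambda>s. indicator A s * (g s)\<^sup>2)"
  define m where "m = I1 / \<tau>"
  text \<open>Expand \<open>\<integral>\<^sub>A (g - m)\<^sup>2 \<ge> 0\<close> with \<open>m\<close> the mean of \<open>g\<close> on \<open>A\<close>.\<close>
  have "0 \<le> integral\<^sup>L M (\<lambda>s. indicator A s * (g s - m)\<^sup>2)"
    by (intro integral_nonneg_AE) auto
  also have "(\<lambda>s. indicator A s * (g s - m)\<^sup>2)
      = (\<lambda>s. indicator A s * (g s)\<^sup>2 - 2 * m * (indicator A s * g s) + m\<^sup>2 * indicator A s)"
    by (auto simp: fun_eq_iff power2_eq_square algebra_simps)
  also have "integral\<^sup>L M \<dots> = I2 - 2 * m * I1 + m\<^sup>2 * \<tau>"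
    using int int2 int0 \<open>measure M A = \<tau>\<close> unfolding I1_def I2_def by simp
  finally have "((1/\<tau>) * I1)\<^sup>2 \<le> (1/\<tau>) * I2"
    using \<open>\<tau> > 0\<close> unfolding m_def by (simp add: field_simps power2_eq_square)
  moreover have "(\<integral>\<^sup>+s. indicator A s * ennreal ((g s)\<^sup>2) \<partial>M) = ennreal I2"
    unfolding nn_eq I2_def by (intro nn_integral_eq_integral int2) auto
  moreover have "0 \<le> I2" unfolding I2_def by (intro integral_nonneg_AE) auto
  ultimately show ?thesis using \<open>\<tau> > 0\<close>
    by (simp add: I1_def ennreal_mult[symmetric] ennreal_leI)
qed

lemma L2_fun_set_integrable:
  assumes "L2_fun u" and [measurable]: "A \<in> sets lborel" and "emeasure lborel A < \<infinity>"
  shows "integrable lborel (\<lambda>s. indicator A s * u s)"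
proof (rule Bochner_Integration.integrable_bound)
  have [measurable]: "u \<in> borel_measurable borel" using assms(1) by (simp add: L2_fun_def)
  show "integrable lborel (\<lambda>s. (u s)\<^sup>2 + indicator A s)"
    using assms by (simp add: L2_fun_def integrable_indicator_iff)
  show "(\<lambda>s. indicator A s * u s) \<in> borel_measurable lborel" by measurable
  have "\<bar>t\<bar> \<le> t\<^sup>2 + 1" for t :: real
    using zero_le_power2[of "\<bar>t\<bar> - 1"] by (simp add: power2_eq_square algebra_simps)
  then show "AE x in lborel. norm (indicator A x * u x) \<le> norm ((u x)\<^sup>2 + indicator A x)"
    by (auto simp: indicator_def)
qed

lemma L2_norm_eq_nn_integral:
  assumes [measurable]: "f \<in> borel_measurable borel"
  shows "L2_norm f = sqrt (enn2real (\<integral>\<^sup>+x. ennreal ((f x)\<^sup>2) \<partial>lborel))"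
  unfolding L2_norm_def by (subst integral_eq_nn_integral) auto

definition H12_density :: "(real \<Rightarrow> real) \<Rightarrow> real \<Rightarrow> ennreal" where
  "H12_density u x = (\<integral>\<^sup>+z. ennreal ((u (x + z) - u x)\<^sup>2 / z\<^sup>2) \<partial>lborel)"

definition shift_energy :: "(real \<Rightarrow> real) \<Rightarrow> real \<Rightarrow> ennreal" where
  "shift_energy u y = (\<integral>\<^sup>+x. ennreal ((u (x + y) - u x)\<^sup>2) \<partial>lborel)"

context
  fixes u :: "real \<Rightarrow> real"
  assumes u_measurable[measurable]: "u \<in> borel_measurable borel"
begin

lemma H12_density_measurable[measurable]: "H12_density u \<in> borel_measurable borel"
proof -
  have "(\<lambda>x. \<integral>\<^sup>+z. ennreal ((u (x + z) - u x)\<^sup>2 / z\<^sup>2) \<partial>lborel) \<in> borel_measurable lborel"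
    by (rule lborel.borel_measurable_nn_integral) (simp add: split_beta', measurable)
  then show ?thesis unfolding H12_density_def[abs_def] by simp
qed

lemma shift_energy_measurable[measurable]: "shift_energy u \<in> borel_measurable borel"
proof -
  have "(\<lambda>y. \<integral>\<^sup>+x. ennreal ((u (x + y) - u x)\<^sup>2) \<partial>lborel) \<in> borel_measurable lborel"
    by (rule lborel.borel_measurable_nn_integral) (simp add: split_beta', measurable)
  then show ?thesis unfolding shift_energy_def[abs_def] by simp
qed

lemma H12_energy_eq_nn_integral_density: "H12_energy u = (\<integral>\<^sup>+x. H12_density u x \<partial>lborel)"
  unfolding H12_energy_def H12_density_def lborel_prod[symmetric]
  by (subst lborel.nn_integral_fst[symmetric]) (auto simp: split_beta')

lemma H12_energy_eq_nn_integral_shift: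
  "H12_energy u = (\<integral>\<^sup>+z. \<integral>\<^sup>+x. ennreal ((u (x + z) - u x)\<^sup>2 / z\<^sup>2) \<partial>lborel \<partial>lborel)"
  unfolding H12_energy_eq_nn_integral_density H12_density_def
  by (rule lborel_pair.Fubini'[symmetric]) (simp add: split_beta', measurable)

lemma H12_density_eq_nn_integral:
  "(\<integral>\<^sup>+t. ennreal ((u t - u s)\<^sup>2 / (t - s)\<^sup>2) \<partial>lborel) = H12_density u s"
  using nn_integral_lborel_shift[of "\<lambda>t. ennreal ((u t - u s)\<^sup>2 / (t - s)\<^sup>2)" s]
  by (simp add: H12_density_def add.commute)

lemma shift_energy_le_triangle: "shift_energy u y \<le> 2 * shift_energy u z + 2 * shift_energy u (y - z)"
proof -
  have "shift_energy u y \<le> (\<integral>\<^sup>+x. 2 * ennreal ((u (x + z) - u x)\<^sup>2)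
      + 2 * ennreal ((u (x + z + (y - z)) - u (x + z))\<^sup>2) \<partial>lborel)"
    unfolding shift_energy_def
  proof (intro nn_integral_mono)
    fix x
    have "ennreal ((u (x + y) - u x)\<^sup>2)
        \<le> ennreal (2 * (u (x + z) - u x)\<^sup>2 + 2 * (u (x + y) - u (x + z))\<^sup>2)"
      using square_add_le[of "u (x + z) - u x" "u (x + y) - u (x + z)"] by (intro ennreal_leI) simp
    then show "ennreal ((u (x + y) - u x)\<^sup>2) \<le> 2 * ennreal ((u (x + z) - u x)\<^sup>2)
        + 2 * ennreal ((u (x + z + (y - z)) - u (x + z))\<^sup>2)"
      by (simp add: ennreal_plus ennreal_mult)
  qed
  also have "\<dots> = 2 * shift_energy u z
      + 2 * (\<integral>\<^sup>+x. ennreal ((u (x + z + (y - z)) - u (x + z))\<^sup>2) \<partial>lborel)"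
    unfolding shift_energy_def by (simp add: nn_integral_add nn_integral_cmult)
  also have "(\<integral>\<^sup>+x. ennreal ((u (x + z + (y - z)) - u (x + z))\<^sup>2) \<partial>lborel) = shift_energy u (y - z)"
    unfolding shift_energy_def
    by (rule nn_integral_lborel_shift[where f="\<lambda>w. ennreal ((u (w + (y - z)) - u w)\<^sup>2)"]) measurable
  finally show ?thesis .
qed

lemma shift_energy_le_quotient:
  assumes "\<bar>z\<bar> \<le> T"
  shows "shift_energy u z \<le> ennreal (T\<^sup>2) * (\<integral>\<^sup>+x. ennreal ((u (x + z) - u x)\<^sup>2 / z\<^sup>2) \<partial>lborel)"
proof -
  have "shift_energy u z \<le> (\<integral>\<^sup>+x. ennreal (T\<^sup>2) * ennreal ((u (x + z) - u x)\<^sup>2 / z\<^sup>2) \<partial>lborel)"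
    unfolding shift_energy_def
  proof (intro nn_integral_mono)
    fix x
    have "(u (x + z) - u x)\<^sup>2 \<le> T\<^sup>2 * ((u (x + z) - u x)\<^sup>2 / z\<^sup>2)"
      using assms by (intro square_le_difference_quotient) auto
    then show "ennreal ((u (x + z) - u x)\<^sup>2) \<le> ennreal (T\<^sup>2) * ennreal ((u (x + z) - u x)\<^sup>2 / z\<^sup>2)"
      by (simp add: ennreal_mult[symmetric] ennreal_leI)
  qed
  also have "\<dots> = ennreal (T\<^sup>2) * (\<integral>\<^sup>+x. ennreal ((u (x + z) - u x)\<^sup>2 / z\<^sup>2) \<partial>lborel)"
    by (rule nn_integral_cmult) measurable
  finally show ?thesis .
qed

lemma nn_integral_shift_energy_between_le:
  "(\<integral>\<^sup>+z. indicator {min 0 y..max 0 y} z * shift_energy u z \<partial>lborel) \<le> ennreal (y\<^sup>2) * H12_energy u"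
proof -
  have "(\<integral>\<^sup>+z. indicator {min 0 y..max 0 y} z * shift_energy u z \<partial>lborel)
      \<le> (\<integral>\<^sup>+z. ennreal (y\<^sup>2) * \<integral>\<^sup>+x. ennreal ((u (x + z) - u x)\<^sup>2 / z\<^sup>2) \<partial>lborel \<partial>lborel)"
    using shift_energy_le_quotient[of _ "\<bar>y\<bar>"]
    by (intro nn_integral_mono) (auto simp: indicator_def)
  also have "\<dots> = ennreal (y\<^sup>2) * H12_energy u"
    unfolding H12_energy_eq_nn_integral_shift
    by (rule nn_integral_cmult, rule lborel.borel_measurable_nn_integral) (simp add: split_beta', measurable)
  finally show ?thesis .
qed

lemma shift_energy_le_H12_energy: "shift_energy u y \<le> ennreal (4 * \<bar>y\<bar>) * H12_energy u"
proof (cases "y = 0")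
  case True
  then show ?thesis by (simp add: shift_energy_def)
next
  case False
  define S where "S = {min 0 y..max 0 y}"
  have "emeasure lborel S = ennreal \<bar>y\<bar>"
    unfolding S_def by (subst emeasure_lborel_Icc) (auto intro: arg_cong[where f=ennreal])
  have S_reflect: "y - z \<in> S \<longleftrightarrow> z \<in> S" for z
    unfolding S_def by (cases "0 \<le> y") auto
  text \<open>Average \<open>shift_energy_le_triangle\<close> over \<open>z \<in> S\<close>; \<open>z \<mapsto> y - z\<close> maps \<open>S\<close> onto itself.\<close>
  have "ennreal \<bar>y\<bar> * shift_energy u y = (\<integral>\<^sup>+z. shift_energy u y * indicator S z \<partial>lborel)"
    using \<open>emeasure lborel S = ennreal \<bar>y\<bar>\<close> by (subst nn_integral_cmult_indicator) (auto simp: S_def mult.commute)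
  also have "\<dots> \<le> (\<integral>\<^sup>+z. 2 * (indicator S z * shift_energy u z)
      + 2 * (indicator S (y - z) * shift_energy u (y - z)) \<partial>lborel)"
    using shift_energy_le_triangle[of y] by (intro nn_integral_mono) (auto simp: S_reflect indicator_def)
  also have "\<dots> = 4 * (\<integral>\<^sup>+z. indicator S z * shift_energy u z \<partial>lborel)"
    using nn_integral_lborel_reflect[of "\<lambda>z. indicator S z * shift_energy u z" y]
    by (simp add: S_def nn_integral_add nn_integral_cmult flip: distrib_right)
  also have "\<dots> \<le> 4 * (ennreal (y\<^sup>2) * H12_energy u)"
    unfolding S_def by (intro mult_left_mono nn_integral_shift_energy_between_le) auto
  also have "\<dots> = ennreal \<bar>y\<bar> * (ennreal (4 * \<bar>y\<bar>) * H12_energy u)"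
  proof -
    have "ennreal (y\<^sup>2) = ennreal \<bar>y\<bar> * ennreal \<bar>y\<bar>"
      by (simp add: ennreal_mult[symmetric] power2_eq_square)
    then show ?thesis by (simp add: ennreal_mult mult_ac)
  qed
  finally show ?thesis using False by (subst (asm) ennreal_mult_le_mult_iff) auto
qed

end

definition cell :: "real \<Rightarrow> real \<Rightarrow> real set" where
  "cell \<tau> x = {of_int \<lfloor>x/\<tau>\<rfloor> * \<tau> <..< (of_int \<lfloor>x/\<tau>\<rfloor> + 1) * \<tau>}"

definition grid_crossing :: "real \<Rightarrow> real \<Rightarrow> real set" where
  "grid_crossing \<tau> y = {x. \<lfloor>x/\<tau>\<rfloor> \<noteq> \<lfloor>(x + y)/\<tau>\<rfloor>}"

lemma floor_divide_eq_iff: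
  "\<tau> > 0 \<Longrightarrow> \<lfloor>z/\<tau>\<rfloor> = k \<longleftrightarrow> of_int k * \<tau> \<le> z \<and> z < (of_int k + 1) * \<tau>"
  by (simp add: floor_eq_iff pos_le_divide_eq pos_divide_less_eq)

lemma floor_divide_bounds:
  "\<tau> > 0 \<Longrightarrow> of_int \<lfloor>x/\<tau>\<rfloor> * \<tau> \<le> x \<and> x < (of_int \<lfloor>x/\<tau>\<rfloor> + 1) * \<tau>"
  using floor_divide_eq_iff by blast

lemma floor_divide_eq_if_mem_cell: "\<tau> > 0 \<Longrightarrow> s \<in> cell \<tau> x \<Longrightarrow> \<lfloor>s/\<tau>\<rfloor> = \<lfloor>x/\<tau>\<rfloor>"
  by (simp add: cell_def floor_divide_eq_iff)

lemma abs_diff_less_if_mem_cell: "\<tau> > 0 \<Longrightarrow> s \<in> cell \<tau> x \<Longrightarrow> \<bar>s - x\<bar> < \<tau>"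
  using floor_divide_bounds[of \<tau> x] by (auto simp: cell_def algebra_simps)

lemma emeasure_cell: "\<tau> > 0 \<Longrightarrow> emeasure lborel (cell \<tau> x) = ennreal \<tau>"
  by (simp add: cell_def algebra_simps)

lemma cell_sets[measurable]: "cell \<tau> x \<in> sets borel"
  by (simp add: cell_def)

lemma pred_mem_cell[measurable]: "Measurable.pred (lborel \<Otimes>\<^sub>M lborel) (\<lambda>z. snd z \<in> cell \<tau> (fst z))"
  unfolding cell_def by (simp add: greaterThanLessThan_iff) measurable

lemma indicator_cell_measurable[measurable]:
  "(\<lambda>z. indicator (cell \<tau> (fst z)) (snd z) :: real) \<in> borel_measurable (lborel \<Otimes>\<^sub>M lborel)"
  "(\<lambda>z. indicator (cell \<tau> (fst z)) (snd z) :: ennreal) \<in> borel_measurable (lborel \<Otimes>\<^sub>M lborel)"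
  using pred_mem_cell[of \<tau>] by (auto simp: indicator_def of_bool_def pred_def intro!: measurable_If_set)

lemma indicator_cell_measurable_center[measurable]:
  "(\<lambda>x. indicator (cell \<tau> x) s :: ennreal) \<in> borel_measurable borel"
  using measurable_compose[of "\<lambda>x. (x, s)" lborel "lborel \<Otimes>\<^sub>M lborel", OF _ indicator_cell_measurable(2)]
  by simp

lemma grid_crossing_sets[measurable]: "grid_crossing \<tau> y \<in> sets borel"
proof -
  have "{x \<in> space borel. \<lfloor>x/\<tau>\<rfloor> \<noteq> \<lfloor>(x + y)/\<tau>\<rfloor>} \<in> sets borel" by measurable
  then show ?thesis unfolding grid_crossing_def by simp
qed

lemma nn_integral_indicator_cell_le:
  assumes "\<tau> > 0"
  shows "(\<integral>\<^sup>+x. indicator (cell \<tau> x) s \<partial>lborel) \<le> ennreal \<tau>"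
proof -
  define k where "k = \<lfloor>s/\<tau>\<rfloor>"
  have "x \<in> {of_int k * \<tau>..(of_int k + 1) * \<tau>}" if "s \<in> cell \<tau> x" for x
    using floor_divide_eq_if_mem_cell[OF assms that] floor_divide_bounds[OF assms, of x] by (simp add: k_def)
  then have "(\<integral>\<^sup>+x. indicator (cell \<tau> x) s \<partial>lborel)
      \<le> (\<integral>\<^sup>+x. indicator {of_int k * \<tau>..(of_int k + 1) * \<tau>} x \<partial>lborel)"
    by (intro nn_integral_mono) (auto simp: indicator_def)
  also have "\<dots> = ennreal \<tau>" using assms by (simp add: algebra_simps)
  finally show ?thesis .
qed

lemma nn_integral_grid_crossing_cell_le:
  assumes "\<tau> > 0"
  shows "(\<integral>\<^sup>+x. indicator (grid_crossing \<tau> y) x * indicator (cell \<tau> x) s \<partial>lborel) \<le> ennreal \<bar>y\<bar>"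
proof -
  define k where "k = \<lfloor>s/\<tau>\<rfloor>"
  define L where "L = (if y \<ge> 0 then (of_int k + 1) * \<tau> - y else of_int k * \<tau>)"
  have "x \<in> {L..L + \<bar>y\<bar>}" if "x \<in> grid_crossing \<tau> y" "s \<in> cell \<tau> x" for x
  proof -
    have "\<lfloor>x/\<tau>\<rfloor> = k" unfolding k_def using floor_divide_eq_if_mem_cell[OF assms that(2)] by simp
    moreover have "\<lfloor>(x + y)/\<tau>\<rfloor> \<noteq> k" using that(1) calculation by (simp add: grid_crossing_def)
    ultimately show ?thesis
      using floor_divide_eq_iff[OF assms, of x k] floor_divide_eq_iff[OF assms, of "x + y" k]
      by (auto simp: L_def)
  qed
  then have "(\<integral>\<^sup>+x. indicator (grid_crossing \<tau> y) x * indicator (cell \<tau> x) s \<partial>lborel)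
      \<le> (\<integral>\<^sup>+x. indicator {L..L + \<bar>y\<bar>} x \<partial>lborel)"
    by (intro nn_integral_mono) (auto simp: indicator_def)
  also have "\<dots> = ennreal \<bar>y\<bar>" by simp
  finally show ?thesis .
qed

lemma P_proj_eq_cell_average:
  "\<tau> > 0 \<Longrightarrow> P_proj \<tau> u x = (1/\<tau>) * integral\<^sup>L lborel (\<lambda>s. indicator (cell \<tau> x) s * u s)"
  unfolding P_proj_def cell_def Let_def
  by (simp add: interval_lebesgue_integral_def set_lebesgue_integral_def)

locale grid_projection =
  fixes \<tau> :: real and u :: "real \<Rightarrow> real"
  assumes tau_pos: "\<tau> > 0" and L2_u: "L2_fun u"
begin

lemma u_measurable[measurable]: "u \<in> borel_measurable borel"
  using L2_u by (simp add: L2_fun_def)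

lemma integrable_cell: "integrable lborel (\<lambda>s. indicator (cell \<tau> x) s * u s)"
  using tau_pos by (intro L2_fun_set_integrable[OF L2_u]) (auto simp: emeasure_cell)

lemma P_proj_measurable[measurable]: "P_proj \<tau> u \<in> borel_measurable borel"
proof -
  have "(\<lambda>(x, s). indicator (cell \<tau> x) s * u s) \<in> borel_measurable (lborel \<Otimes>\<^sub>M lborel)"
    unfolding case_prod_beta by measurable
  from lborel.borel_measurable_lebesgue_integral[OF this]
  have "(\<lambda>x. (1/\<tau>) * integral\<^sup>L lborel (\<lambda>s. indicator (cell \<tau> x) s * u s)) \<in> borel_measurable lborel"
    by measurable
  moreover have "P_proj \<tau> u = (\<lambda>x. (1/\<tau>) * integral\<^sup>L lborel (\<lambda>s. indicator (cell \<tau> x) s * u s))"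
    using P_proj_eq_cell_average[OF tau_pos] by blast
  ultimately show ?thesis by simp
qed

lemma P_proj_minus_square_le:
  "ennreal ((P_proj \<tau> u x - v)\<^sup>2)
     \<le> ennreal (1/\<tau>) * (\<integral>\<^sup>+s. indicator (cell \<tau> x) s * ennreal ((u s - v)\<^sup>2) \<partial>lborel)"
proof -
  have ind: "integrable lborel (\<lambda>s. indicator (cell \<tau> x) s :: real)"
    "integral\<^sup>L lborel (\<lambda>s. indicator (cell \<tau> x) s :: real) = \<tau>"
    using emeasure_cell[OF tau_pos, of x] tau_pos by (auto simp: integrable_indicator_iff measure_def)
  have split: "indicator (cell \<tau> x) s * (u s - v) = indicator (cell \<tau> x) s * u s - v * indicator (cell \<tau> x) s"
    for s :: real by (simp add: algebra_simps)
  have "integrable lborel (\<lambda>s. indicator (cell \<tau> x) s * (u s - v))"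
    unfolding split using ind integrable_cell by simp
  moreover have "P_proj \<tau> u x - v = (1/\<tau>) * integral\<^sup>L lborel (\<lambda>s. indicator (cell \<tau> x) s * (u s - v))"
    unfolding split P_proj_eq_cell_average[OF tau_pos] using ind integrable_cell tau_pos
    by (simp add: field_simps)
  ultimately show ?thesis
    using tau_pos by (simp only:) (intro mean_square_le; simp add: emeasure_cell)
qed

lemma nn_integral_P_proj_square_le:
  "(\<integral>\<^sup>+x. ennreal ((P_proj \<tau> u x)\<^sup>2) \<partial>lborel) \<le> (\<integral>\<^sup>+x. ennreal ((u x)\<^sup>2) \<partial>lborel)"
proof -
  have "(\<integral>\<^sup>+x. ennreal ((P_proj \<tau> u x)\<^sup>2) \<partial>lborel)
      \<le> (\<integral>\<^sup>+x. ennreal (1/\<tau>) * (\<integral>\<^sup>+s. indicator (cell \<tau> x) s * ennreal ((u s)\<^sup>2) \<partial>lborel) \<partial>lborel)"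
    using P_proj_minus_square_le[where v=0] by (intro nn_integral_mono) simp
  also have "\<dots> = ennreal (1/\<tau>) * (\<integral>\<^sup>+x. \<integral>\<^sup>+s. indicator (cell \<tau> x) s * ennreal ((u s)\<^sup>2) \<partial>lborel \<partial>lborel)"
    by (rule nn_integral_cmult) measurable
  also have "\<dots> = ennreal (1/\<tau>) * (\<integral>\<^sup>+s. \<integral>\<^sup>+x. indicator (cell \<tau> x) s * ennreal ((u s)\<^sup>2) \<partial>lborel \<partial>lborel)"
    by (subst lborel_pair.Fubini') (auto simp: case_prod_beta)
  also have "\<dots> = ennreal (1/\<tau>) * (\<integral>\<^sup>+s. (\<integral>\<^sup>+x. indicator (cell \<tau> x) s \<partial>lborel) * ennreal ((u s)\<^sup>2) \<partial>lborel)"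
    by (simp add: nn_integral_multc)
  also have "\<dots> \<le> ennreal (1/\<tau>) * (\<integral>\<^sup>+s. ennreal \<tau> * ennreal ((u s)\<^sup>2) \<partial>lborel)"
    using tau_pos by (intro mult_left_mono nn_integral_mono mult_right_mono nn_integral_indicator_cell_le) auto
  also have "\<dots> = ennreal (1/\<tau>) * ennreal \<tau> * (\<integral>\<^sup>+x. ennreal ((u x)\<^sup>2) \<partial>lborel)"
    by (subst nn_integral_cmult) (auto simp: mult.assoc)
  also have "\<dots> = (\<integral>\<^sup>+x. ennreal ((u x)\<^sup>2) \<partial>lborel)"
    using tau_pos by (simp add: ennreal_mult[symmetric])
  finally show ?thesis .
qed

text \<open>Every point of the cell of \<open>w\<close> is within \<open>(c + 1) \<tau>\<close> of \<open>s\<close>, so the difference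
  quotients in \<open>H12_density u s\<close> control the variance of \<open>u\<close> around \<open>u s\<close> on that cell.\<close>
lemma P_proj_minus_square_le_density:
  assumes "\<bar>s - w\<bar> \<le> c * \<tau>" "c \<ge> 0"
  shows "ennreal ((P_proj \<tau> u w - u s)\<^sup>2) \<le> ennreal ((c + 1)\<^sup>2 * \<tau>) * H12_density u s"
proof -
  have "ennreal ((P_proj \<tau> u w - u s)\<^sup>2)
      \<le> ennreal (1/\<tau>) * (\<integral>\<^sup>+t. indicator (cell \<tau> w) t * ennreal ((u t - u s)\<^sup>2) \<partial>lborel)"
    by (rule P_proj_minus_square_le)
  also have "(\<integral>\<^sup>+t. indicator (cell \<tau> w) t * ennreal ((u t - u s)\<^sup>2) \<partial>lborel)
      \<le> (\<integral>\<^sup>+t. ennreal (((c + 1) * \<tau>)\<^sup>2) * ennreal ((u t - u s)\<^sup>2 / (t - s)\<^sup>2) \<partial>lborel)"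
  proof (intro nn_integral_mono)
    fix t
    show "indicator (cell \<tau> w) t * ennreal ((u t - u s)\<^sup>2)
        \<le> ennreal (((c + 1) * \<tau>)\<^sup>2) * ennreal ((u t - u s)\<^sup>2 / (t - s)\<^sup>2)"
    proof (cases "t \<in> cell \<tau> w")
      case True
      then have "\<bar>t - s\<bar> \<le> (c + 1) * \<tau>"
        using abs_diff_less_if_mem_cell[OF tau_pos True] assms by (simp add: algebra_simps)
      then have "(u t - u s)\<^sup>2 \<le> ((c + 1) * \<tau>)\<^sup>2 * ((u t - u s)\<^sup>2 / (t - s)\<^sup>2)"
        by (intro square_le_difference_quotient) auto
      then show ?thesis
        using True by (simp add: ennreal_mult[symmetric] ennreal_leI del: power_mult_distrib)
    qed simp
  qed
  also have "\<dots> = ennreal (((c + 1) * \<tau>)\<^sup>2) * H12_density u s"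
    by (subst nn_integral_cmult) (auto simp: H12_density_eq_nn_integral)
  finally have "ennreal ((P_proj \<tau> u w - u s)\<^sup>2)
      \<le> ennreal (1/\<tau>) * (ennreal (((c + 1) * \<tau>)\<^sup>2) * H12_density u s)"
    by (simp add: mult_left_mono)
  also have "\<dots> = ennreal ((1/\<tau>) * ((c + 1) * \<tau>)\<^sup>2) * H12_density u s"
    using tau_pos by (subst ennreal_mult) (auto simp: mult.assoc)
  also have "(1/\<tau>) * ((c + 1) * \<tau>)\<^sup>2 = (c + 1)\<^sup>2 * \<tau>"
    using tau_pos by (simp add: power2_eq_square)
  finally show ?thesis .
qed

lemma nn_integral_P_proj_minus_self_le:
  "(\<integral>\<^sup>+x. ennreal ((P_proj \<tau> u x - u x)\<^sup>2) \<partial>lborel) \<le> ennreal \<tau> * H12_energy u"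
proof -
  have "(\<integral>\<^sup>+x. ennreal ((P_proj \<tau> u x - u x)\<^sup>2) \<partial>lborel) \<le> (\<integral>\<^sup>+x. ennreal \<tau> * H12_density u x \<partial>lborel)"
    using P_proj_minus_square_le_density[of _ _ 0] tau_pos by (intro nn_integral_mono) simp
  also have "\<dots> = ennreal \<tau> * H12_energy u"
    by (simp add: nn_integral_cmult H12_energy_eq_nn_integral_density)
  finally show ?thesis .
qed

lemma P_proj_shift_square_le_crossing:
  assumes "\<bar>y\<bar> \<le> \<tau>"
  shows "ennreal ((P_proj \<tau> u (x + y) - P_proj \<tau> u x)\<^sup>2)
     \<le> 9 * (\<integral>\<^sup>+s. indicator (grid_crossing \<tau> y) x * indicator (cell \<tau> x) s * H12_density u s \<partial>lborel)"
proof (cases "x \<in> grid_crossing \<tau> y")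
  case False
  then have "cell \<tau> x = cell \<tau> (x + y)" unfolding grid_crossing_def cell_def by simp
  then show ?thesis by (simp add: P_proj_eq_cell_average[OF tau_pos])
next
  case True
  have "ennreal ((P_proj \<tau> u (x + y) - P_proj \<tau> u x)\<^sup>2)
      \<le> ennreal (1/\<tau>) * (\<integral>\<^sup>+s. indicator (cell \<tau> x) s * ennreal ((u s - P_proj \<tau> u (x + y))\<^sup>2) \<partial>lborel)"
    using P_proj_minus_square_le[of x "P_proj \<tau> u (x + y)"] by (simp add: power2_commute)
  also have "\<dots> \<le> ennreal (1/\<tau>) * (\<integral>\<^sup>+s. ennreal (9 * \<tau>) * (indicator (cell \<tau> x) s * H12_density u s) \<partial>lborel)"
  proof (rule mult_left_mono[OF nn_integral_mono])
    fix s
    show "indicator (cell \<tau> x) s * ennreal ((u s - P_proj \<tau> u (x + y))\<^sup>2)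
        \<le> ennreal (9 * \<tau>) * (indicator (cell \<tau> x) s * H12_density u s)"
    proof (cases "s \<in> cell \<tau> x")
      case True
      then have "\<bar>s - (x + y)\<bar> \<le> 2 * \<tau>"
        using abs_diff_less_if_mem_cell[OF tau_pos True] assms by linarith
      from P_proj_minus_square_le_density[OF this] show ?thesis
        using True by (simp add: power2_commute)
    qed simp
  qed simp
  also have "\<dots> = ennreal (1/\<tau>) * ennreal (9 * \<tau>) * (\<integral>\<^sup>+s. indicator (cell \<tau> x) s * H12_density u s \<partial>lborel)"
    by (simp add: nn_integral_cmult mult.assoc)
  also have "\<dots> = 9 * (\<integral>\<^sup>+s. indicator (cell \<tau> x) s * H12_density u s \<partial>lborel)"
    using tau_pos by (simp add: ennreal_mult[symmetric])
  finally show ?thesis using True by simp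
qed

lemma shift_energy_P_proj_le_small:
  assumes "\<bar>y\<bar> \<le> \<tau>"
  shows "shift_energy (P_proj \<tau> u) y \<le> ennreal (9 * \<bar>y\<bar>) * H12_energy u"
proof -
  have m: "(\<lambda>(x, s). indicator (grid_crossing \<tau> y) x * indicator (cell \<tau> x) s * H12_density u s)
      \<in> borel_measurable (lborel \<Otimes>\<^sub>M lborel)"
    unfolding case_prod_beta by measurable
  have "shift_energy (P_proj \<tau> u) y \<le> (\<integral>\<^sup>+x. 9 * (\<integral>\<^sup>+s. indicator (grid_crossing \<tau> y) x
      * indicator (cell \<tau> x) s * H12_density u s \<partial>lborel) \<partial>lborel)"
    unfolding shift_energy_def by (intro nn_integral_mono P_proj_shift_square_le_crossing assms)
  also have "\<dots> = 9 * (\<integral>\<^sup>+s. \<integral>\<^sup>+x. indicator (grid_crossing \<tau> y) x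
      * indicator (cell \<tau> x) s * H12_density u s \<partial>lborel \<partial>lborel)"
    using lborel.borel_measurable_nn_integral[OF m]
    by (simp add: nn_integral_cmult lborel_pair.Fubini'[OF m])
  also have "\<dots> = 9 * (\<integral>\<^sup>+s. (\<integral>\<^sup>+x. indicator (grid_crossing \<tau> y) x * indicator (cell \<tau> x) s \<partial>lborel)
      * H12_density u s \<partial>lborel)"
    by (simp add: nn_integral_multc)
  also have "\<dots> \<le> 9 * (\<integral>\<^sup>+s. ennreal \<bar>y\<bar> * H12_density u s \<partial>lborel)"
    by (intro mult_left_mono nn_integral_mono mult_right_mono nn_integral_grid_crossing_cell_le tau_pos) auto
  also have "\<dots> = ennreal (9 * \<bar>y\<bar>) * H12_energy u"
    by (simp add: nn_integral_cmult H12_energy_eq_nn_integral_density ennreal_mult mult.assoc)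
  finally show ?thesis .
qed

lemma shift_energy_P_proj_le_large:
  assumes "\<tau> < \<bar>y\<bar>"
  shows "shift_energy (P_proj \<tau> u) y \<le> ennreal (18 * \<bar>y\<bar>) * H12_energy u"
proof -
  define A where "A = (\<integral>\<^sup>+x. ennreal ((P_proj \<tau> u x - u x)\<^sup>2) \<partial>lborel)"
  have "shift_energy (P_proj \<tau> u) y \<le> (\<integral>\<^sup>+x. 3 * (ennreal ((P_proj \<tau> u (x + y) - u (x + y))\<^sup>2)
      + ennreal ((u (x + y) - u x)\<^sup>2) + ennreal ((P_proj \<tau> u x - u x)\<^sup>2)) \<partial>lborel)"
    unfolding shift_energy_def
  proof (intro nn_integral_mono)
    fix x
    have "(P_proj \<tau> u (x + y) - u (x + y)) + (u (x + y) - u x) + (u x - P_proj \<tau> u x)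
        = P_proj \<tau> u (x + y) - P_proj \<tau> u x"
      by simp
    with ennreal_square_add3_le[of "P_proj \<tau> u (x + y) - u (x + y)" "u (x + y) - u x" "u x - P_proj \<tau> u x"]
    show "ennreal ((P_proj \<tau> u (x + y) - P_proj \<tau> u x)\<^sup>2) \<le> 3 * (ennreal ((P_proj \<tau> u (x + y) - u (x + y))\<^sup>2)
        + ennreal ((u (x + y) - u x)\<^sup>2) + ennreal ((P_proj \<tau> u x - u x)\<^sup>2))"
      by (simp add: power2_commute[of "u x"])
  qed
  also have "\<dots> = 3 * (A + shift_energy u y + A)"
    using nn_integral_lborel_shift[of "\<lambda>x. ennreal ((P_proj \<tau> u x - u x)\<^sup>2)" y]
    by (simp add: A_def shift_energy_def nn_integral_add nn_integral_cmult)
  also have "\<dots> \<le> 3 * (ennreal \<bar>y\<bar> * H12_energy u + ennreal (4 * \<bar>y\<bar>) * H12_energy u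
      + ennreal \<bar>y\<bar> * H12_energy u)"
  proof -
    have "A \<le> ennreal \<bar>y\<bar> * H12_energy u"
      unfolding A_def using assms
      by (intro order_trans[OF nn_integral_P_proj_minus_self_le] mult_right_mono) auto
    then show ?thesis
      by (intro mult_left_mono add_mono shift_energy_le_H12_energy) auto
  qed
  also have "\<dots> = ennreal (18 * \<bar>y\<bar>) * H12_energy u"
    by (simp add: ennreal_mult distrib_right[symmetric] ennreal_plus[symmetric] mult.assoc del: ennreal_plus)
  finally show ?thesis .
qed

lemma shift_energy_P_proj_le: "shift_energy (P_proj \<tau> u) y \<le> ennreal (18 * \<bar>y\<bar>) * H12_energy u"
proof (cases "\<bar>y\<bar> \<le> \<tau>")
  case True
  then show ?thesis
    by (intro order_trans[OF shift_energy_P_proj_le_small] mult_right_mono ennreal_leI) auto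
qed (simp add: shift_energy_P_proj_le_large)

lemma nn_integral_square_finite: "(\<integral>\<^sup>+x. ennreal ((u x)\<^sup>2) \<partial>lborel) < \<infinity>"
  using integrableD(2)[of lborel "\<lambda>x. (u x)\<^sup>2"] L2_u by (simp add: L2_fun_def less_top)

lemma L2_fun_P_proj: "L2_fun (P_proj \<tau> u)"
  unfolding L2_fun_def
  using order.strict_trans1[OF nn_integral_P_proj_square_le nn_integral_square_finite]
  by (auto intro!: integrableI_nonneg)

lemma L2_norm_P_proj_le: "L2_norm (P_proj \<tau> u) \<le> L2_norm u"
  using nn_integral_P_proj_square_le nn_integral_square_finite
  by (simp add: L2_norm_eq_nn_integral enn2real_mono)

end

lemma H12w_consts_sqrt_memI:
  assumes [measurable]: "f \<in> borel_measurable borel" and "c \<ge> 0"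
    and shift: "\<And>y. shift_energy f y \<le> ennreal (c * \<bar>y\<bar>)"
  shows "sqrt c \<in> H12w_consts f"
  unfolding H12w_consts_def
proof (intro CollectI conjI allI)
  fix y
  have "L2_norm (\<lambda>x. f x - transl y f x) = sqrt (enn2real (shift_energy f y))"
    by (simp add: L2_norm_eq_nn_integral transl_def shift_energy_def power2_commute)
  also have "\<dots> \<le> sqrt (c * \<bar>y\<bar>)"
    using shift[of y] \<open>c \<ge> 0\<close> by (intro real_sqrt_le_mono) (auto simp: enn2real_leI)
  finally show "L2_norm (\<lambda>x. f x - transl y f x) \<le> sqrt c * sqrt \<bar>y\<bar>"
    by (simp add: real_sqrt_mult)
qed (use \<open>c \<ge> 0\<close> in simp)

lemma H12w_semi_le: "C \<in> H12w_consts f \<Longrightarrow> H12w_semi f \<le> C"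
  unfolding H12w_semi_def
  by (rule cInf_lower) (auto simp: bdd_below_def H12w_consts_def)

theorem proposition3:
  shows "\<exists>C>0. \<forall>\<tau>>0. \<forall>u. H12 u \<longrightarrow>
     H12w (P_proj \<tau> u) \<and>
     L2_norm (P_proj \<tau> u) + H12w_semi (P_proj \<tau> u) \<le> C * (L2_norm u + H12_semi u)"
proof (intro exI[of _ 5] conjI allI impI)
  fix \<tau> :: real and u :: "real \<Rightarrow> real"
  assume "\<tau> > 0" "H12 u"
  then interpret grid_projection \<tau> u by unfold_locales (auto simp: H12_def)
  define e where "e = enn2real (H12_energy u)"
  have "H12_energy u = ennreal e" "e \<ge> 0"
    using \<open>H12 u\<close> by (auto simp: e_def H12_def less_top)
  then have "sqrt (18 * e) \<in> H12w_consts (P_proj \<tau> u)"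
    using shift_energy_P_proj_le by (intro H12w_consts_sqrt_memI) (auto simp: ennreal_mult' mult_ac)
  then have "H12w_semi (P_proj \<tau> u) \<le> sqrt 18 * sqrt e" and "H12w (P_proj \<tau> u)"
    using L2_fun_P_proj by (auto simp: H12w_def real_sqrt_mult dest: H12w_semi_le)
  moreover have "sqrt 18 \<le> (5::real)"
    by (rule real_le_lsqrt) auto
  moreover have "H12_semi u = sqrt e" "L2_norm u \<ge> 0"
    by (simp_all add: H12_semi_def e_def L2_norm_def)
  ultimately show "H12w (P_proj \<tau> u)"
    and "L2_norm (P_proj \<tau> u) + H12w_semi (P_proj \<tau> u) \<le> 5 * (L2_norm u + H12_semi u)"
    using L2_norm_P_proj_le mult_right_mono[of "sqrt 18" 5 "sqrt e"] \<open>e \<ge> 0\<close> by auto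
qed simp

end
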